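(* Let $\mathcal H$ be a well-structured preconditioner set, $f:\mathbb R^d\to\mathbb R$ differentiable, and $\{f_t\}_{t\in\mathcal T}$ random differentiable functions with $\mathbb E[\nabla f_t(x)]=\nabla f(x)$ for all $t,x$. If there is $\Sigma\in\mathcal S_+^d$ with $\mathbb E[(\nabla f(x)-\nabla f_t(x))(\nabla f(x)-\nabla f_t(x))^\top]\preceq\Sigma$ for all $x\in\mathbb R^d$ and $t\in\mathcal T$, then $\sigma_{\mathcal H}(\{f_t\}_{t\in\mathcal T})\le\operatorname{Tr}(P_{\mathcal H}(\Sigma))$.
   Context: $\mathcal S^d_+$ (resp. $\mathcal S^d_{++}$) denotes the set of real symmetric positive semidefinite (resp. positive definite) $d\times d$ matrices; $\langle A,B\rangle=\operatorname{Tr}(A^\top B)$. A set $\mathcal H\subseteq\mathcal S_+^d$ is a well-structured preconditioner set if $\mathcal H=\mathcal S_+^d\cap\mathcal K$ for some set $\mathcal K$ of real $d\times d$ matrices that is closed under scalar multiplication, matrix addition and matrix multiplication and contains the identity $I_d$. For $M\in\mathcal S^d_{++}$, $P_{\mathcal H}(M):=\arg\min_{H\in\mathcal H\cap\mathcal S^d_{++}}\langle M,H^{-1}\rangle+\operatorname{Tr}(H)$ (the minimizer exists and is unique); for singular $M\in\mathcal S^d_+$, $P_{\mathcal H}(M):=\lim_{\delta\downarrow0}P_{\mathcal H}(M+\delta I_d)$. Adaptive gradient variance: $\sigma_{\mathcal H}(\{f_t\})^2:=\inf_{H\in\mathcal H\cap\mathcal S^d_{++},\operatorname{Tr}(H)\le1}\sup_{t,x}\mathbb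 E\|\nabla f_t(x)-\mathbb E[\nabla f_t(x)]\|_{H^{-1}}^2$, where $\|v\|_{H^{-1}}=\sqrt{v^\top H^{-1}v}$. *)

theory Defs
  imports "HOL-Probability.Probability"
begin

text \<open>Matrices are d x d real matrices represented as real^'n^'n (d = CARD('n)).\<close>

definition psd :: "real^'n^'n \<Rightarrow> bool" where
  "psd A \<longleftrightarrow> transpose A = A \<and> (\<forall>v. 0 \<le> v \<bullet> (A *v v))"

definition pd :: "real^'n^'n \<Rightarrow> bool" where
  "pd A \<longleftrightarrow> transpose A = A \<and> (\<forall>v. v \<noteq> 0 \<longrightarrow> 0 < v \<bullet> (A *v v))"

definition loewner_le :: "real^'n^'n \<Rightarrow> real^'n^'n \<Rightarrow> bool" where
  "loewner_le A B \<longleftrightarrow> psd (B - A)"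

definition frob :: "real^'n^'n \<Rightarrow> real^'n^'n \<Rightarrow> real" where
  "frob A B = trace (transpose A ** B)"

definition outer :: "real^'n \<Rightarrow> real^'n \<Rightarrow> real^'n^'n" where
  "outer v w = (\<chi> i j. v $ i * w $ j)"

definition well_structured :: "(real^'n^'n) set \<Rightarrow> bool" where
  "well_structured Hs \<longleftrightarrow>
     (\<exists>K :: (real^'n^'n) set.
        (\<forall>c A. A \<in> K \<longrightarrow> c *\<^sub>R A \<in> K) \<and>
        (\<forall>A B. A \<in> K \<longrightarrow> B \<in> K \<longrightarrow> A + B \<in> K) \<and>
        (\<forall>A B. A \<in> K \<longrightarrow> B \<in> K \<longrightarrow> A ** B \<in> K) \<and>
        mat 1 \<in> K \<and>
        Hs = {A. psd A} \<inter> K)"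

definition precond_pd :: "(real^'n^'n) set \<Rightarrow> real^'n^'n \<Rightarrow> real^'n^'n" where
  "precond_pd Hs M = (THE H. H \<in> Hs \<and> pd H \<and>
      (\<forall>H'\<in>Hs. pd H' \<longrightarrow>
         frob M (matrix_inv H) + trace H \<le> frob M (matrix_inv H') + trace H'))"

definition precond :: "(real^'n^'n) set \<Rightarrow> real^'n^'n \<Rightarrow> real^'n^'n" where
  "precond Hs M = (if pd M then precond_pd Hs M
     else Lim (at_right (0::real)) (\<lambda>\<delta>. precond_pd Hs (M + \<delta> *\<^sub>R mat 1)))"

definition grad :: "(real^'n \<Rightarrow> real) \<Rightarrow> real^'n \<Rightarrow> real^'n" where
  "grad f x = (THE g. (f has_derivative (\<lambda>h. g \<bullet> h)) (at x))"

text \<open>Squared adaptive gradient variance sigma_H({f_t})^2 of the random functions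
  F t \<omega> (t \<in> index type, \<omega> drawn from probability space M), valued in [0,\<infinity>].\<close>
definition adaptive_var_sq ::
  "(real^'n^'n) set \<Rightarrow> 'w measure \<Rightarrow> ('t \<Rightarrow> 'w \<Rightarrow> real^'n \<Rightarrow> real) \<Rightarrow> ennreal" where
  "adaptive_var_sq Hs M F =
     (INF H \<in> {H \<in> Hs. pd H \<and> trace H \<le> 1}.
        SUP t. SUP x.
          (\<integral>\<^sup>+ \<omega>. ennreal
             (let v = grad (F t \<omega>) x
                      - (\<integral>\<omega>'. grad (F t \<omega>') x \<partial>M)
              in v \<bullet> (matrix_inv H *v v)) \<partial>M))"

definition adaptive_std ::
  "(real^'n^'n) set \<Rightarrow> 'w measure \<Rightarrow> ('t \<Rightarrow> 'w \<Rightarrow> real^'n \<Rightarrow> real) \<Rightarrow> ennreal" where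
  "adaptive_std Hs M F =
     (let s = adaptive_var_sq Hs M F in
      if s = \<infinity> then \<infinity> else ennreal (sqrt (enn2real s)))"

end

theory Submission
  imports Defs
begin

text \<open>
  Write the preconditioner set as S_+ \<inter> K for a unital matrix algebra K. Every function of a
  symmetric element of K is a polynomial in it and hence lies in K. So if Q is the orthogonal
  projection of a positive definite N onto the symmetric part of K, then Q is positive definite,
  S = Q^(1/2) lies in K, and for every H \<in> K the objective equals
  <N, H^-1> + Tr H = Tr((S - H) H^-1 (S - H)) + 2 Tr S, whence P(N) = S.
  Testing the adaptive variance with H = S / Tr S and bounding the covariance by N gives
  \<sigma>^2 \<le> Tr S <S^-1, N> = (Tr S)^2. For singular \<Sigma> apply this to N = \<Sigma> + \<delta> I, where
  P(\<Sigma> + \<delta> I) = (Q + \<delta> I)^(1/2) tends to P(\<Sigma>) as \<delta> tends to 0.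
\<close>

lemma outer_mult_vec: "outer u w *v x = (w \<bullet> x) *\<^sub>R u"
  by (simp add: outer_def vec_eq_iff matrix_vector_mult_def inner_vec_def sum_distrib_left mult_ac)

lemma transpose_outer: "transpose (outer u w) = outer w u"
  by (simp add: outer_def transpose_def vec_eq_iff)

lemma trace_outer: "trace (outer u w) = u \<bullet> w"
  by (simp add: outer_def trace_def inner_vec_def)

lemma inner_outer: "G \<bullet> outer v w = v \<bullet> (G *v w)"
  unfolding outer_def inner_vec_def matrix_vector_mult_def
  by (simp add: sum_distrib_left mult_ac)

lemma frob_eq_inner: "frob A B = A \<bullet> B"
  unfolding frob_def trace_def inner_vec_def matrix_matrix_mult_def transpose_def
  by (simp, subst sum.swap, simp)

lemma trace_matrix_mult_eq_inner: "trace (A ** B) = transpose A \<bullet> (B :: real^'n^'n)"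
  using frob_eq_inner[of "transpose A" B] by (simp add: frob_def)

lemma inner_symmetric_matrix_vector_mult:
  "transpose A = A \<Longrightarrow> x \<bullet> (A *v y) = (A *v x) \<bullet> (y :: real^'n)"
  by (metis dot_lmul_matrix transpose_matrix_vector)

lemma sum_matrix_vector_mult: "sum f S *v (x :: real^'n) = (\<Sum>u\<in>S. f u *v x)"
  by (induction S rule: infinite_finite_induct) (simp_all add: matrix_vector_mult_add_rdistrib)

lemma matrix_vector_mult_sum: "(A :: real^'n^'n) *v sum f S = (\<Sum>u\<in>S. A *v f u)"
  by (induction S rule: infinite_finite_induct) (simp_all add: matrix_vector_right_distrib)

lemma transpose_sum: "transpose (sum f S) = (\<Sum>u\<in>S. transpose (f u))"
  by (simp add: transpose_def vec_eq_iff)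

lemma transpose_add: "transpose (A + B) = transpose A + transpose B"
  by (simp add: transpose_def vec_eq_iff)

lemma transpose_diff: "transpose (A - B) = transpose A - transpose B"
  by (simp add: transpose_def vec_eq_iff)

lemma trace_sum: "trace (sum f S) = (\<Sum>u\<in>S. trace (f u))"
  unfolding trace_def by (simp, subst sum.swap, simp)

lemma trace_zero [simp]: "trace (0 :: real^'n^'n) = 0"
  by (simp add: trace_def)

lemma trace_scaleR: "trace (c *\<^sub>R A) = c * trace (A :: real^'n^'n)"
  by (simp add: trace_def sum_distrib_left)

lemma matrix_diff_ldistrib: "(A :: real^'n^'n) ** (B - C) = A ** B - A ** C"
  by (simp add: matrix_matrix_mult_def vec_eq_iff sum_subtractf right_diff_distrib)

lemma matrix_diff_rdistrib: "((B :: real^'n^'n) - C) ** A = B ** A - C ** A"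
  by (simp add: matrix_matrix_mult_def vec_eq_iff sum_subtractf left_diff_distrib)

lemma tendsto_trace:
  "(f \<longlongrightarrow> A) F \<Longrightarrow> ((\<lambda>x. trace (f x)) \<longlongrightarrow> trace (A :: real^'n^'n)) F"
  unfolding trace_def by (intro tendsto_sum tendsto_vec_nth)

lemma invertible_matrix_inv:
  fixes A :: "'a::semiring_1^'n^'m"
  assumes "invertible A"
  shows "A ** matrix_inv A = mat 1" "matrix_inv A ** A = mat 1"
  using someI_ex[OF assms[unfolded invertible_def]] by (simp_all add: matrix_inv_def)

lemma matrix_inv_unique:
  fixes A :: "'a::semiring_1^'n^'m"
  assumes "A ** X = mat 1" "X ** A = mat 1"
  shows "matrix_inv A = X"
proof -
  have "invertible A" using assms by (auto simp: invertible_def)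
  then have "matrix_inv A = (matrix_inv A ** A) ** X"
    by (simp flip: matrix_mul_assoc add: assms(1))
  then show ?thesis by (simp add: invertible_matrix_inv[OF \<open>invertible A\<close>])
qed

lemma matrix_inv_scaleR:
  fixes A :: "real^'n^'n"
  assumes "c \<noteq> 0" "invertible A"
  shows "matrix_inv (c *\<^sub>R A) = inverse c *\<^sub>R matrix_inv A"
  by (rule matrix_inv_unique)
    (simp_all add: assms matrix_scalar_ac invertible_matrix_inv flip: scalar_matrix_assoc)

section \<open>Spectral decomposition of symmetric matrices\<close>

definition orthonormal_basis :: "(real^'n) set \<Rightarrow> bool" where
  "orthonormal_basis B \<longleftrightarrow>
     finite B \<and> (\<forall>u\<in>B. \<forall>w\<in>B. u \<bullet> w = (if u = w then 1 else 0)) \<and> span B = UNIV"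

definition spectral_matrix :: "(real^'n) set \<Rightarrow> (real^'n \<Rightarrow> real) \<Rightarrow> real^'n^'n" where
  "spectral_matrix B g = (\<Sum>u\<in>B. g u *\<^sub>R outer u u)"

lemma orthonormal_basis_sum_inner:
  assumes "orthonormal_basis B" shows "(\<Sum>u\<in>B. (u \<bullet> x) *\<^sub>R u) = x"
proof -
  have fin: "finite B" and sp: "span B = UNIV"
    and on: "\<And>u w. u \<in> B \<Longrightarrow> w \<in> B \<Longrightarrow> u \<bullet> w = (if u = w then 1 else 0)"
    using assms by (auto simp: orthonormal_basis_def)
  have "pairwise orthogonal B" using on by (auto simp: pairwise_def orthogonal_def)
  moreover have "\<And>u. u \<in> B \<Longrightarrow> norm u = 1" using on by (simp add: norm_eq_1)
  ultimately have "(\<Sum>u\<in>B. (x \<bullet> u) *\<^sub>R u) = x"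
    by (rule orthonormal_basis_expand) (auto simp: sp fin)
  then show ?thesis by (simp add: inner_commute)
qed

lemma orthonormal_basis_inner_sum:
  assumes "orthonormal_basis B" "u \<in> B" shows "u \<bullet> (\<Sum>w\<in>B. c w *\<^sub>R w) = c u"
proof -
  have "u \<bullet> (\<Sum>w\<in>B. c w *\<^sub>R w) = (\<Sum>w\<in>B. if u = w then c w else 0)"
    using assms by (intro trans[OF inner_sum_right] sum.cong) (auto simp: orthonormal_basis_def)
  then show ?thesis using assms by (simp add: orthonormal_basis_def)
qed

lemma orthonormal_basis_nonzero:
  "orthonormal_basis B \<Longrightarrow> u \<in> B \<Longrightarrow> u \<noteq> 0"
  unfolding orthonormal_basis_def by (metis inner_zero_left zero_neq_one)

lemma orthonormal_basis_nonzero_coeff: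
  assumes "orthonormal_basis B" "v \<noteq> 0" obtains u where "u \<in> B" "u \<bullet> v \<noteq> 0"
  using orthonormal_basis_sum_inner[OF assms(1), of v] assms(2)
  by (metis (no_types, lifting) scale_eq_0_iff sum.neutral)

lemma orthonormal_basis_matrix_eq_0:
  fixes D :: "real^'n^'n"
  assumes "orthonormal_basis B" "\<And>u. u \<in> B \<Longrightarrow> D *v u = 0" shows "D = 0"
proof (subst matrix_eq, intro allI)
  fix x
  have "D *v x = D *v (\<Sum>u\<in>B. (u \<bullet> x) *\<^sub>R u)" by (simp add: orthonormal_basis_sum_inner[OF assms(1)])
  also have "\<dots> = 0" by (simp add: matrix_vector_mult_sum matrix_vector_mult_scaleR assms(2))
  finally show "D *v x = 0 *v x" by simp
qed

lemma spectral_matrix_mult_vec: "spectral_matrix B g *v x = (\<Sum>u\<in>B. (g u * (u \<bullet> x)) *\<^sub>R u)"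
  by (simp add: spectral_matrix_def sum_matrix_vector_mult outer_mult_vec
      flip: scaleR_matrix_vector_assoc)

lemma spectral_matrix_cong:
  "(\<And>u. u \<in> B \<Longrightarrow> g u = h u) \<Longrightarrow> spectral_matrix B g = spectral_matrix B h"
  unfolding spectral_matrix_def by (rule sum.cong) auto

lemma spectral_matrix_mult:
  assumes "orthonormal_basis B"
  shows "spectral_matrix B g ** spectral_matrix B h = spectral_matrix B (\<lambda>u. g u * h u)"
proof (subst matrix_eq, intro allI)
  fix x
  have "(spectral_matrix B g ** spectral_matrix B h) *v x
      = (\<Sum>u\<in>B. (g u * (u \<bullet> (\<Sum>w\<in>B. (h w * (w \<bullet> x)) *\<^sub>R w))) *\<^sub>R u)"
    by (simp add: spectral_matrix_mult_vec flip: matrix_vector_mul_assoc)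
  also have "\<dots> = spectral_matrix B (\<lambda>u. g u * h u) *v x"
    by (simp add: spectral_matrix_mult_vec orthonormal_basis_inner_sum[OF assms] mult.assoc
        cong: sum.cong)
  finally show "(spectral_matrix B g ** spectral_matrix B h) *v x = spectral_matrix B (\<lambda>u. g u * h u) *v x" .
qed

lemma spectral_matrix_one: "orthonormal_basis B \<Longrightarrow> spectral_matrix B (\<lambda>_. 1) = mat 1"
  by (subst matrix_eq) (simp add: spectral_matrix_mult_vec orthonormal_basis_sum_inner)

lemma spectral_matrix_add: "spectral_matrix B (\<lambda>u. g u + h u) = spectral_matrix B g + spectral_matrix B h"
  by (simp add: spectral_matrix_def scaleR_add_left sum.distrib)

lemma spectral_matrix_diff: "spectral_matrix B (\<lambda>u. g u - h u) = spectral_matrix B g - spectral_matrix B h"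
  by (simp add: spectral_matrix_def scaleR_diff_left sum_subtractf)

lemma spectral_matrix_scale: "spectral_matrix B (\<lambda>u. c * g u) = c *\<^sub>R spectral_matrix B g"
  by (simp add: spectral_matrix_def scaleR_sum_right)

lemma spectral_matrix_const: "orthonormal_basis B \<Longrightarrow> spectral_matrix B (\<lambda>_. c) = c *\<^sub>R mat 1"
  using spectral_matrix_scale[of B c "\<lambda>_. 1"] by (simp add: spectral_matrix_one)

lemma spectral_matrix_sum:
  "finite S \<Longrightarrow> (\<Sum>a\<in>S. spectral_matrix B (f a)) = spectral_matrix B (\<lambda>u. \<Sum>a\<in>S. f a u)"
  unfolding spectral_matrix_def by (simp add: scaleR_sum_left, subst sum.swap, simp)

lemma transpose_spectral_matrix: "transpose (spectral_matrix B g) = spectral_matrix B g"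
  by (simp add: spectral_matrix_def transpose_sum transpose_scalar transpose_outer)

lemma spectral_matrix_quadratic_form:
  "v \<bullet> (spectral_matrix B g *v v) = (\<Sum>u\<in>B. g u * (u \<bullet> v)\<^sup>2)"
  by (simp add: spectral_matrix_mult_vec inner_sum_right power2_eq_square inner_commute mult_ac)

lemma trace_spectral_matrix_mult:
  "trace (spectral_matrix B g ** N) = (\<Sum>u\<in>B. g u * (u \<bullet> (N *v u)))"
proof -
  have "trace (spectral_matrix B g ** N) = spectral_matrix B g \<bullet> N"
    by (simp add: trace_matrix_mult_eq_inner transpose_spectral_matrix)
  also have "\<dots> = (\<Sum>u\<in>B. g u * (outer u u \<bullet> N))"
    by (simp add: spectral_matrix_def inner_sum_left)
  finally show ?thesis by (simp add: inner_commute[of "outer _ _" N] inner_outer)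
qed

lemma trace_spectral_matrix:
  assumes "orthonormal_basis B" shows "trace (spectral_matrix B g) = (\<Sum>u\<in>B. g u)"
proof -
  have "trace (spectral_matrix B g) = (\<Sum>u\<in>B. g u * (u \<bullet> u))"
    by (simp add: spectral_matrix_def trace_sum trace_scaleR trace_outer)
  also have "\<dots> = (\<Sum>u\<in>B. g u)"
    using assms by (intro sum.cong) (auto simp: orthonormal_basis_def)
  finally show ?thesis .
qed

lemma pd_spectral_matrix:
  fixes B :: "(real^'n) set"
  assumes B: "orthonormal_basis B" and g: "\<And>u. u \<in> B \<Longrightarrow> 0 < g u"
  shows "pd (spectral_matrix B g)"
  unfolding pd_def
proof (intro conjI allI impI)
  show "transpose (spectral_matrix B g) = spectral_matrix B g" by (rule transpose_spectral_matrix)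
  fix v :: "real^'n" assume "v \<noteq> 0"
  then obtain u where u: "u \<in> B" "u \<bullet> v \<noteq> 0" using orthonormal_basis_nonzero_coeff[OF B] by blast
  have "0 < (\<Sum>u\<in>B. g u * (u \<bullet> v)\<^sup>2)"
    using B u g by (intro sum_pos2[OF _ u(1)]) (auto simp: orthonormal_basis_def less_imp_le)
  then show "0 < v \<bullet> (spectral_matrix B g *v v)" by (simp add: spectral_matrix_quadratic_form)
qed

lemma spectral_matrix_inverse:
  assumes B: "orthonormal_basis B" and g: "\<And>u. u \<in> B \<Longrightarrow> g u \<noteq> 0"
  shows "invertible (spectral_matrix B g)"
    and "matrix_inv (spectral_matrix B g) = spectral_matrix B (\<lambda>u. 1 / g u)"
proof -
  have "spectral_matrix B g ** spectral_matrix B (\<lambda>u. 1 / g u) = mat 1"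
    and "spectral_matrix B (\<lambda>u. 1 / g u) ** spectral_matrix B g = mat 1"
    using g by (simp_all add: spectral_matrix_mult[OF B] spectral_matrix_one[OF B]
        cong: spectral_matrix_cong)
  then show "invertible (spectral_matrix B g)"
    and "matrix_inv (spectral_matrix B g) = spectral_matrix B (\<lambda>u. 1 / g u)"
    by (auto simp: invertible_def intro: matrix_inv_unique)
qed

lemma tendsto_spectral_matrix:
  "(\<And>u. ((\<lambda>x. g x u) \<longlongrightarrow> h u) F) \<Longrightarrow>
    ((\<lambda>x. spectral_matrix B (g x)) \<longlongrightarrow> spectral_matrix B h) F"
  unfolding spectral_matrix_def by (intro tendsto_sum tendsto_scaleR tendsto_const)

lemma linear_coeff_eq_0_if_quadratic_nonpos:
  fixes a b :: real
  assumes "\<And>t. a * t + b * t\<^sup>2 \<le> 0" shows "a = 0"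
proof (rule ccontr)
  assume "a \<noteq> 0"
  define c where "c = \<bar>b\<bar> + 1"
  define t where "t = a / c"
  have c: "c > 0" by (simp add: c_def)
  have "a * t - \<bar>b\<bar> * t\<^sup>2 = a\<^sup>2 / c\<^sup>2 * (c - \<bar>b\<bar>)"
    using c unfolding t_def by (simp add: field_simps power2_eq_square)
  then have "a\<^sup>2 / c\<^sup>2 = a * t - \<bar>b\<bar> * t\<^sup>2" by (simp add: c_def)
  also have "\<dots> \<le> a * t + b * t\<^sup>2"
    using mult_right_mono[of "-\<bar>b\<bar>" b "t\<^sup>2"] by simp
  finally show False using assms[of t] \<open>a \<noteq> 0\<close> c
    by (smt (verit) divide_pos_pos zero_less_power2)
qed

text \<open>With \<lambda> = v \<bullet> A v the maximal Rayleigh quotient on V, the quadratic polynomial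
  t \<mapsto> (v + t w) \<bullet> A (v + t w) - \<lambda> |v + t w|^2 is nonpositive and vanishes at 0, so its
  linear coefficient 2 w \<bullet> (A v - \<lambda> v) is zero.\<close>
lemma Rayleigh_maximizer_eigenvector:
  fixes A :: "real^'n^'n"
  assumes sym: "transpose A = A" and V: "subspace V" "A *v v \<in> V"
    and v: "v \<in> V" "v \<bullet> v = 1"
    and max: "\<And>u. u \<in> V \<Longrightarrow> u \<bullet> (A *v u) \<le> (v \<bullet> (A *v v)) * (u \<bullet> u)"
  shows "A *v v = (v \<bullet> (A *v v)) *\<^sub>R v"
proof -
  define lam where "lam = v \<bullet> (A *v v)"
  have orth: "w \<bullet> (A *v v - lam *\<^sub>R v) = 0" if w: "w \<in> V" for w
  proof -
    have "(2 * (w \<bullet> (A *v v) - lam * (v \<bullet> w))) * t + (w \<bullet> (A *v w) - lam * (w \<bullet> w)) * t\<^sup>2 \<le> 0"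
      for t
    proof -
      have "v + t *\<^sub>R w \<in> V" using v w V by (simp add: subspace_add subspace_scale)
      from max[OF this]
      have "(v + t *\<^sub>R w) \<bullet> (A *v (v + t *\<^sub>R w)) \<le> lam * ((v + t *\<^sub>R w) \<bullet> (v + t *\<^sub>R w))"
        by (simp add: lam_def)
      moreover have "v \<bullet> (A *v w) = w \<bullet> (A *v v)"
        using inner_symmetric_matrix_vector_mult[OF sym, of v w] by (simp add: inner_commute)
      ultimately show ?thesis
        by (simp add: matrix_vector_right_distrib matrix_vector_mult_scaleR inner_add_left
            inner_add_right v(2) lam_def[symmetric] inner_commute[of w v] algebra_simps power2_eq_square)
    qed
    then show ?thesis
      using linear_coeff_eq_0_if_quadratic_nonpos by (fastforce simp: inner_diff_right inner_commute[of w v])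
  qed
  have "A *v v - lam *\<^sub>R v \<in> V" using V v by (simp add: subspace_diff subspace_scale)
  from orth[OF this] show ?thesis by (simp add: lam_def)
qed

lemma symmetric_invariant_subspace_eigenvector:
  fixes A :: "real^'n^'n"
  assumes sym: "transpose A = A" and V: "subspace V" "V \<noteq> {0}"
    and inv: "\<And>x. x \<in> V \<Longrightarrow> A *v x \<in> V"
  obtains v where "v \<in> V" "v \<bullet> v = 1" "A *v v = (v \<bullet> (A *v v)) *\<^sub>R v"
proof -
  obtain x where x: "x \<in> V" "x \<noteq> 0" using V subspace_0 by blast
  let ?S = "sphere 0 1 \<inter> V"
  have "compact ?S" by (intro compact_Int_closed compact_sphere closed_subspace V)
  moreover have "x /\<^sub>R norm x \<in> ?S" using x V by (simp add: subspace_scale)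
  moreover have "continuous_on ?S (\<lambda>x. x \<bullet> (A *v x))"
    by (intro continuous_intros linear_continuous_on matrix_vector_mul_linear
        linear_conv_bounded_linear[THEN iffD1])
  ultimately obtain v where vS: "v \<in> ?S" and vmax: "\<And>y. y \<in> ?S \<Longrightarrow> y \<bullet> (A *v y) \<le> v \<bullet> (A *v v)"
    using continuous_attains_sup[of ?S] by blast
  have v: "v \<in> V" "v \<bullet> v = 1" using vS by (auto simp: norm_eq_1)
  have "u \<bullet> (A *v u) \<le> (v \<bullet> (A *v v)) * (u \<bullet> u)" if u: "u \<in> V" for u
  proof (cases "u = 0")
    case False
    have "u /\<^sub>R norm u \<in> ?S" using False u V by (simp add: subspace_scale)
    from vmax[OF this] have "(u \<bullet> (A *v u)) / (norm u)\<^sup>2 \<le> v \<bullet> (A *v v)"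
      by (simp add: matrix_vector_mult_scaleR power2_eq_square divide_inverse mult_ac)
    then show ?thesis using False by (simp add: divide_le_eq power2_norm_eq_inner mult.commute)
  qed simp
  with Rayleigh_maximizer_eigenvector[OF sym V(1) inv[OF v(1)] v] show thesis using that v by blast
qed

lemma span_insert_orthogonal_complement:
  assumes V: "subspace V" and v: "v \<in> V" "v \<bullet> v = 1" and B: "span B = {x \<in> V. v \<bullet> x = 0}"
  shows "span (insert v B) = V"
proof
  have "B \<subseteq> V" using B span_superset by blast
  then show "span (insert v B) \<subseteq> V" using V v by (simp add: span_minimal)
  show "V \<subseteq> span (insert v B)"
  proof
    fix x assume x: "x \<in> V"
    have "x - (v \<bullet> x) *\<^sub>R v \<in> span B"
      using x v V by (simp add: B subspace_diff subspace_scale inner_diff_right)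
    then have "x - (v \<bullet> x) *\<^sub>R v \<in> span (insert v B)"
      using span_mono[of B "insert v B"] by blast
    moreover have "(v \<bullet> x) *\<^sub>R v \<in> span (insert v B)"
      by (simp add: span_base span_scale)
    ultimately have "x - (v \<bullet> x) *\<^sub>R v + (v \<bullet> x) *\<^sub>R v \<in> span (insert v B)"
      by (rule span_add)
    then show "x \<in> span (insert v B)" by simp
  qed
qed

lemma symmetric_invariant_subspace_orthonormal_eigenbasis:
  fixes A :: "real^'n^'n"
  assumes sym: "transpose A = A"
  shows "subspace V \<Longrightarrow> (\<forall>x\<in>V. A *v x \<in> V) \<Longrightarrow>
    \<exists>B. finite B \<and> (\<forall>u\<in>B. \<forall>w\<in>B. u \<bullet> w = (if u = w then 1 else 0)) \<and> span B = V \<and>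
        (\<forall>u\<in>B. A *v u = (u \<bullet> (A *v u)) *\<^sub>R u)"
proof (induction "dim V" arbitrary: V rule: less_induct)
  case less
  show ?case
  proof (cases "V = {0}")
    case True
    then show ?thesis by (intro exI[of _ "{}"]) auto
  next
    case False
    with less.prems obtain v where v: "v \<in> V" "v \<bullet> v = 1" "A *v v = (v \<bullet> (A *v v)) *\<^sub>R v"
      using symmetric_invariant_subspace_eigenvector[OF sym] by metis
    define V' where "V' = {x \<in> V. v \<bullet> x = 0}"
    have V': "subspace V'"
      using less.prems(1) unfolding V'_def subspace_def by (auto simp: inner_add_right)
    have inv': "\<forall>x\<in>V'. A *v x \<in> V'"
      using less.prems(2) v(3) inner_symmetric_matrix_vector_mult[OF sym, of v]
      by (auto simp: V'_def) (metis inner_scaleR_left mult_zero_right)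
    have "v \<notin> V'" using v(2) by (simp add: V'_def)
    moreover have "V' \<subseteq> V" by (auto simp: V'_def)
    ultimately have "V' \<subset> V" using v(1) by blast
    then have "dim V' < dim V"
      using dim_psubset span_eq_iff less.prems(1) V' by metis
    from less.hyps[OF this V' inv'] obtain B where B: "finite B"
      "\<forall>u\<in>B. \<forall>w\<in>B. u \<bullet> w = (if u = w then 1 else 0)" "span B = V'"
      "\<forall>u\<in>B. A *v u = (u \<bullet> (A *v u)) *\<^sub>R u" by blast
    have "B \<subseteq> V'" using B(3) span_superset by blast
    then have "v \<notin> B" using v(2) by (auto simp: V'_def)
    show ?thesis
    proof (intro exI[of _ "insert v B"] conjI)
      show "span (insert v B) = V"
        using span_insert_orthogonal_complement less.prems(1) v(1,2) B(3) by (simp add: V'_def)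
      show "\<forall>u\<in>insert v B. \<forall>w\<in>insert v B. u \<bullet> w = (if u = w then 1 else 0)"
        using B(2) \<open>B \<subseteq> V'\<close> \<open>v \<notin> B\<close> v(2) by (auto simp: V'_def inner_commute)
    qed (use B v in auto)
  qed
qed

theorem symmetric_matrix_spectral_decomposition:
  fixes A :: "real^'n^'n"
  assumes sym: "transpose A = A"
  obtains B where "orthonormal_basis B" "A = spectral_matrix B (\<lambda>u. u \<bullet> (A *v u))"
proof -
  obtain B where B: "finite B" "\<forall>u\<in>B. \<forall>w\<in>B. u \<bullet> w = (if u = w then 1 else 0)"
      "span B = UNIV" and eig: "\<forall>u\<in>B. A *v u = (u \<bullet> (A *v u)) *\<^sub>R u"
    using symmetric_invariant_subspace_orthonormal_eigenbasis[OF sym, of UNIV] by auto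
  then have onb: "orthonormal_basis B" by (simp add: orthonormal_basis_def)
  have "A *v x = spectral_matrix B (\<lambda>u. u \<bullet> (A *v u)) *v x" for x
  proof -
    have "A *v x = (\<Sum>u\<in>B. (u \<bullet> x) *\<^sub>R (A *v u))"
      by (subst (1) orthonormal_basis_sum_inner[OF onb, symmetric])
        (simp add: matrix_vector_mult_sum matrix_vector_mult_scaleR)
    also have "\<dots> = (\<Sum>u\<in>B. ((u \<bullet> (A *v u)) * (u \<bullet> x)) *\<^sub>R u)"
      using eig by (intro sum.cong refl) (metis scaleR_scaleR mult.commute)
    also have "\<dots> = spectral_matrix B (\<lambda>u. u \<bullet> (A *v u)) *v x"
      by (simp add: spectral_matrix_mult_vec)
    finally show ?thesis .
  qed
  then show thesis using that onb matrix_eq by blast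
qed

section \<open>Positive definite matrices\<close>

lemma psd_spectral_decomposition:
  assumes "psd A"
  obtains B lam where "orthonormal_basis B" "A = spectral_matrix B lam" "\<And>u. u \<in> B \<Longrightarrow> 0 \<le> lam u"
  using assms symmetric_matrix_spectral_decomposition[of A] by (metis psd_def)

lemma pd_spectral_decomposition:
  assumes "pd A"
  obtains B lam where "orthonormal_basis B" "A = spectral_matrix B lam" "\<And>u. u \<in> B \<Longrightarrow> 0 < lam u"
proof -
  obtain B where B: "orthonormal_basis B" "A = spectral_matrix B (\<lambda>u. u \<bullet> (A *v u))"
    using assms symmetric_matrix_spectral_decomposition by (auto simp: pd_def)
  then show thesis using that[OF B] assms orthonormal_basis_nonzero[OF B(1)] by (simp add: pd_def)
qed

lemma pd_imp_psd: "pd A \<Longrightarrow> psd A"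
  unfolding pd_def psd_def by (metis inner_zero_left order_refl less_imp_le)

lemma pd_matrix_inv:
  assumes "pd A"
  shows "invertible A" "pd (matrix_inv A)"
proof -
  obtain B lam where B: "orthonormal_basis B" "A = spectral_matrix B lam" "\<And>u. u \<in> B \<Longrightarrow> 0 < lam u"
    using pd_spectral_decomposition[OF assms] by blast
  then show "invertible A" "pd (matrix_inv A)"
    by (simp_all add: spectral_matrix_inverse pd_spectral_matrix less_imp_neq[symmetric])
qed

lemma pd_scaleR: "0 < c \<Longrightarrow> pd A \<Longrightarrow> pd (c *\<^sub>R A)"
  by (simp add: pd_def transpose_scalar flip: scaleR_matrix_vector_assoc)

lemma diag_eq_inner_axis: "(A :: real^'n^'n) $ i $ i = axis i 1 \<bullet> (A *v axis i 1)"
  by (simp add: inner_axis' matrix_vector_mult_basis column_def)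

lemma trace_pos_if_pd: "pd (A :: real^'n^'n) \<Longrightarrow> 0 < trace A"
  unfolding trace_def by (rule sum_pos) (auto simp: diag_eq_inner_axis pd_def axis_eq_0_iff)

lemma scaled_identity_mult_vec: "(d *\<^sub>R mat 1) *v v = d *\<^sub>R (v :: real^'n)"
  by (simp flip: scaleR_matrix_vector_assoc)

lemma psd_add_scaled_identity: "psd A \<Longrightarrow> 0 \<le> d \<Longrightarrow> psd (A + d *\<^sub>R mat 1)"
  by (simp add: psd_def transpose_add transpose_scalar matrix_vector_mult_add_rdistrib
      inner_add_right scaled_identity_mult_vec)

lemma pd_add_scaled_identity: "psd A \<Longrightarrow> 0 < d \<Longrightarrow> pd (A + d *\<^sub>R mat 1)"
  by (simp add: psd_def pd_def transpose_add transpose_scalar matrix_vector_mult_add_rdistrib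
      inner_add_right scaled_identity_mult_vec add_nonneg_pos)

lemma loewner_le_add_scaled_identity:
  "loewner_le A B \<Longrightarrow> 0 \<le> d \<Longrightarrow> loewner_le A (B + d *\<^sub>R mat 1)"
  using psd_add_scaled_identity[of "B - A" d] by (simp add: loewner_le_def algebra_simps)

lemma trace_psd_mult_nonneg:
  assumes "psd G" "psd N" shows "0 \<le> trace (G ** N)"
proof -
  obtain B lam where "G = spectral_matrix B lam" "\<And>u. u \<in> B \<Longrightarrow> 0 \<le> lam u"
    using psd_spectral_decomposition[OF assms(1)] by blast
  with assms(2) show ?thesis by (simp add: trace_spectral_matrix_mult sum_nonneg psd_def)
qed

lemma trace_sandwich_pd:
  fixes D G :: "real^'n^'n"
  assumes G: "pd G" and D: "transpose D = D"
  shows "0 \<le> trace (D ** G ** D)" and "trace (D ** G ** D) = 0 \<Longrightarrow> D = 0"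
proof -
  obtain B g where B: "orthonormal_basis B" "G = spectral_matrix B g" "\<And>u. u \<in> B \<Longrightarrow> 0 < g u"
    using pd_spectral_decomposition[OF G] by blast
  have "trace (D ** G ** D) = trace (G ** (D ** D))"
    using trace_mul_sym[of "D ** G" D] trace_mul_sym[of "D ** D" G] by (simp add: matrix_mul_assoc)
  also have "\<dots> = (\<Sum>u\<in>B. g u * ((D *v u) \<bullet> (D *v u)))"
    unfolding B(2) trace_spectral_matrix_mult
    by (simp add: inner_symmetric_matrix_vector_mult[OF D] flip: matrix_vector_mul_assoc)
  finally have tr: "trace (D ** G ** D) = (\<Sum>u\<in>B. g u * ((D *v u) \<bullet> (D *v u)))" .
  have nonneg: "\<And>u. u \<in> B \<Longrightarrow> 0 \<le> g u * ((D *v u) \<bullet> (D *v u))"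
    using B(3) by (simp add: less_imp_le)
  then show "0 \<le> trace (D ** G ** D)" unfolding tr by (rule sum_nonneg)
  assume "trace (D ** G ** D) = 0"
  then have "\<forall>u\<in>B. g u * ((D *v u) \<bullet> (D *v u)) = 0"
    using B(1) nonneg tr by (simp add: sum_nonneg_eq_0_iff orthonormal_basis_def)
  then show "D = 0"
    using B(3) by (intro orthonormal_basis_matrix_eq_0[OF B(1)]) fastforce
qed

lemma trace_sandwich_inverse:
  fixes S H G :: "real^'n^'n"
  assumes "H ** G = mat 1" "G ** H = mat 1"
  shows "trace ((S - H) ** G ** (S - H)) = trace (S ** S ** G) - 2 * trace S + trace H"
proof -
  have "(S - H) ** G ** (S - H) = S ** G ** S - S ** (G ** H) - (H ** G) ** S + (H ** G) ** H"
    by (simp add: matrix_diff_rdistrib matrix_diff_ldistrib matrix_mul_assoc)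
  then have "trace ((S - H) ** G ** (S - H)) = trace (S ** G ** S) - trace S - trace S + trace H"
    by (simp only: assms matrix_mul_lid matrix_mul_rid trace_sub trace_add)
  moreover have "trace (S ** G ** S) = trace (S ** S ** G)"
    using trace_mul_sym[of "S ** G" S] by (simp add: matrix_mul_assoc)
  ultimately show ?thesis by simp
qed

section \<open>Adaptive variance\<close>

lemma nn_integral_quadratic_form_le:
  fixes G N :: "real^'n^'n" and w :: "'a \<Rightarrow> real^'n"
  assumes G: "psd G" and int: "integrable M (\<lambda>x. outer (w x) (w x))"
    and cov: "loewner_le (\<integral>x. outer (w x) (w x) \<partial>M) N"
  shows "(\<integral>\<^sup>+x. ennreal (w x \<bullet> (G *v w x)) \<partial>M) \<le> ennreal (G \<bullet> N)"
proof -
  let ?C = "\<integral>x. outer (w x) (w x) \<partial>M"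
  have "(\<integral>\<^sup>+x. ennreal (w x \<bullet> (G *v w x)) \<partial>M) = (\<integral>\<^sup>+x. ennreal (G \<bullet> outer (w x) (w x)) \<partial>M)"
    by (simp add: inner_outer)
  also have "\<dots> = ennreal (\<integral>x. G \<bullet> outer (w x) (w x) \<partial>M)"
    using G int by (intro nn_integral_eq_integral integrable_inner_right) (auto simp: inner_outer psd_def)
  also have "\<dots> = ennreal (G \<bullet> ?C)"
    using int by simp
  finally have eq: "(\<integral>\<^sup>+x. ennreal (w x \<bullet> (G *v w x)) \<partial>M) = ennreal (G \<bullet> ?C)" .
  have "0 \<le> trace (G ** (N - ?C))"
    using G cov by (intro trace_psd_mult_nonneg) (simp_all add: loewner_le_def)
  then have "G \<bullet> ?C \<le> G \<bullet> N"
    using G by (simp add: trace_matrix_mult_eq_inner psd_def inner_diff_right)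
  then show ?thesis unfolding eq by (rule ennreal_leI)
qed

lemma adaptive_std_le_of_var_sq_le:
  assumes "adaptive_var_sq Hs M F \<le> ennreal (T * T)" "0 \<le> T"
  shows "adaptive_std Hs M F \<le> ennreal T"
proof -
  have "adaptive_var_sq Hs M F < top"
    using assms(1) ennreal_less_top by (rule le_less_trans)
  then have finite: "adaptive_var_sq Hs M F \<noteq> \<infinity>" by (simp add: infinity_ennreal_def)
  have "enn2real (adaptive_var_sq Hs M F) \<le> T * T"
    using enn2real_mono[OF assms(1)] assms(2) by simp
  then have "sqrt (enn2real (adaptive_var_sq Hs M F)) \<le> T"
    using assms(2) real_sqrt_le_mono[of _ "T * T"] by (simp add: real_sqrt_mult_self)
  then show ?thesis using finite by (simp add: adaptive_std_def ennreal_leI)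
qed

section \<open>Unital matrix algebras and the preconditioner map\<close>

locale matrix_algebra =
  fixes K :: "(real^'n^'n) set"
  assumes scaleR_mem: "A \<in> K \<Longrightarrow> c *\<^sub>R A \<in> K"
    and add_mem: "A \<in> K \<Longrightarrow> B \<in> K \<Longrightarrow> A + B \<in> K"
    and mult_mem: "A \<in> K \<Longrightarrow> B \<in> K \<Longrightarrow> A ** B \<in> K"
    and one_mem: "mat 1 \<in> K"
begin

lemma zero_mem: "0 \<in> K"
  using scaleR_mem[OF one_mem, of 0] by simp

lemma diff_mem: "A \<in> K \<Longrightarrow> B \<in> K \<Longrightarrow> A - B \<in> K"
  using add_mem[of A "(-1) *\<^sub>R B"] scaleR_mem[of B "-1"] by simp

lemma sum_mem: "(\<And>a. a \<in> S \<Longrightarrow> f a \<in> K) \<Longrightarrow> sum f S \<in> K"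
  by (induction S rule: infinite_finite_induct) (auto simp: zero_mem add_mem)

lemma spectral_poly_mem:
  assumes B: "orthonormal_basis B" and A: "spectral_matrix B lam \<in> K" and S: "finite S"
  shows "spectral_matrix B (\<lambda>u. \<Prod>b\<in>S. lam u - b) \<in> K"
  using S
proof (induction S rule: finite_induct)
  case empty
  then show ?case using spectral_matrix_one[OF B] one_mem by simp
next
  case (insert b S)
  have "spectral_matrix B (\<lambda>u. \<Prod>b\<in>insert b S. lam u - b)
      = spectral_matrix B (\<lambda>u. lam u - b) ** spectral_matrix B (\<lambda>u. \<Prod>b\<in>S. lam u - b)"
    using insert by (simp add: spectral_matrix_mult[OF B])
  moreover have "spectral_matrix B (\<lambda>u. lam u - b) = spectral_matrix B lam - b *\<^sub>R mat 1"
    using spectral_matrix_diff[of B lam "\<lambda>_. b"] by (simp add: spectral_matrix_const[OF B])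
  ultimately show ?case
    using insert.IH A by (simp add: mult_mem diff_mem scaleR_mem one_mem)
qed

text \<open>On the finite spectrum lam ` B the indicator of a is a multiple of the polynomial
  \<Prod>b\<in>lam ` B - {a}. x - b.\<close>
lemma spectral_indicator_mem:
  assumes B: "orthonormal_basis B" and A: "spectral_matrix B lam \<in> K"
  shows "spectral_matrix B (\<lambda>u. if lam u = a then 1 else 0) \<in> K"
proof -
  define S where "S = lam ` B - {a}"
  define c where "c = (\<Prod>b\<in>S. a - b)"
  have S: "finite S" using B by (simp add: S_def orthonormal_basis_def)
  then have "c \<noteq> 0" by (simp add: c_def S_def)
  have "spectral_matrix B (\<lambda>u. \<Prod>b\<in>S. lam u - b) = spectral_matrix B (\<lambda>u. c * (if lam u = a then 1 else 0))"
    using S by (intro spectral_matrix_cong) (auto simp: c_def S_def prod_zero_iff)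
  then have "c *\<^sub>R spectral_matrix B (\<lambda>u. if lam u = a then 1 else 0) \<in> K"
    using spectral_poly_mem[OF B A S] by (simp add: spectral_matrix_scale)
  from scaleR_mem[OF this, of "inverse c"] \<open>c \<noteq> 0\<close> show ?thesis by simp
qed

lemma spectral_fun_mem:
  assumes B: "orthonormal_basis B" and A: "spectral_matrix B lam \<in> K"
  shows "spectral_matrix B (\<lambda>u. g (lam u)) \<in> K"
proof -
  have fin: "finite (lam ` B)" using B by (simp add: orthonormal_basis_def)
  have "spectral_matrix B (\<lambda>u. g (lam u))
      = spectral_matrix B (\<lambda>u. \<Sum>a\<in>lam ` B. g a * (if lam u = a then 1 else 0))"
    using fin by (intro spectral_matrix_cong) (simp add: if_distrib sum.delta cong: if_cong)
  also have "\<dots> = (\<Sum>a\<in>lam ` B. g a *\<^sub>R spectral_matrix B (\<lambda>u. if lam u = a then 1 else 0))"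
    using fin by (simp add: spectral_matrix_sum flip: spectral_matrix_scale)
  finally show ?thesis
    by (simp add: sum_mem scaleR_mem spectral_indicator_mem[OF B A])
qed

lemma matrix_inv_mem:
  assumes "H \<in> K" "pd H" shows "matrix_inv H \<in> K"
proof -
  obtain B lam where B: "orthonormal_basis B" "H = spectral_matrix B lam" "\<And>u. u \<in> B \<Longrightarrow> 0 < lam u"
    using pd_spectral_decomposition[OF assms(2)] by blast
  then show ?thesis
    using spectral_fun_mem[of B lam "\<lambda>x. 1 / x"] assms(1)
    by (simp add: spectral_matrix_inverse less_imp_neq[symmetric])
qed

definition same_projection :: "real^'n^'n \<Rightarrow> real^'n^'n \<Rightarrow> bool" where
  "same_projection N Q \<longleftrightarrow> (\<forall>Y\<in>K. transpose Y = Y \<longrightarrow> N \<bullet> Y = Q \<bullet> Y)"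

lemma same_projection_shift:
  "same_projection N Q \<Longrightarrow> same_projection (N + d *\<^sub>R mat 1) (Q + d *\<^sub>R mat 1)"
  by (simp add: same_projection_def inner_add_left)

lemma symmetric_projection_exists:
  obtains Q where "Q \<in> K" "transpose Q = Q" "same_projection N Q"
proof -
  define Ks where "Ks = {A \<in> K. transpose A = A}"
  have "subspace Ks"
    unfolding subspace_def Ks_def
    by (auto simp: zero_mem add_mem scaleR_mem transpose_add transpose_scalar)
      (simp add: transpose_def vec_eq_iff)
  then have span: "span Ks = Ks" by (simp add: span_eq_iff)
  obtain Q R where Q: "Q \<in> span Ks" and R: "\<And>Y. Y \<in> span Ks \<Longrightarrow> orthogonal R Y"
    and N: "N = Q + R"
    using orthogonal_subspace_decomp_exists[of Ks N] by blast
  show thesis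
  proof (rule that)
    have "Q \<in> Ks" using Q span by simp
    then show "Q \<in> K" "transpose Q = Q" by (simp_all add: Ks_def)
    show "same_projection N Q" unfolding same_projection_def
    proof (intro ballI impI)
      fix Y assume "Y \<in> K" "transpose Y = Y"
      then have "Y \<in> span Ks" by (simp add: Ks_def span_base)
      then show "N \<bullet> Y = Q \<bullet> Y" using R by (simp add: N inner_add_left orthogonal_def)
    qed
  qed
qed

text \<open>Test the projection identity against the spectral projection of Q onto its eigenvalues
  satisfying P, which lies in K.\<close>
lemma projection_spectral_sum:
  assumes B: "orthonormal_basis B"
    and Q: "spectral_matrix B lam \<in> K" "same_projection N (spectral_matrix B lam)"
  shows "(\<Sum>u | u \<in> B \<and> P (lam u). lam u) = (\<Sum>u | u \<in> B \<and> P (lam u). u \<bullet> (N *v u))"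
proof -
  define E where "E = spectral_matrix B (\<lambda>u. if P (lam u) then 1 else 0)"
  have "E \<in> K"
    using spectral_fun_mem[OF B Q(1), of "\<lambda>x. if P x then 1 else 0"] by (simp add: E_def)
  moreover have E: "transpose E = E" by (simp add: E_def transpose_spectral_matrix)
  ultimately have "N \<bullet> E = spectral_matrix B lam \<bullet> E"
    using Q(2) by (simp add: same_projection_def)
  moreover have "spectral_matrix B lam \<bullet> E = (\<Sum>u\<in>B. if P (lam u) then lam u else 0)"
  proof -
    have "spectral_matrix B lam \<bullet> E = trace (spectral_matrix B lam ** E)"
      by (simp add: trace_matrix_mult_eq_inner transpose_spectral_matrix)
    then show ?thesis
      by (simp add: E_def spectral_matrix_mult[OF B] trace_spectral_matrix[OF B] if_distrib
          cong: if_cong)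
  qed
  moreover have "N \<bullet> E = (\<Sum>u\<in>B. if P (lam u) then u \<bullet> (N *v u) else 0)"
  proof -
    have "N \<bullet> E = trace (E ** N)" by (simp add: trace_matrix_mult_eq_inner E inner_commute)
    also have "\<dots> = (\<Sum>u\<in>B. (if P (lam u) then 1 else 0) * (u \<bullet> (N *v u)))"
      by (simp add: E_def trace_spectral_matrix_mult)
    also have "\<dots> = (\<Sum>u\<in>B. if P (lam u) then u \<bullet> (N *v u) else 0)"
      by (rule sum.cong) simp_all
    finally show ?thesis .
  qed
  ultimately show ?thesis
    using B by (simp add: sum.inter_filter orthonormal_basis_def)
qed

lemma projection_spectral_decomposition:
  assumes N: "psd N"
  obtains B lam where "orthonormal_basis B" "spectral_matrix B lam \<in> K"
    "same_projection N (spectral_matrix B lam)" "\<And>u. u \<in> B \<Longrightarrow> 0 \<le> lam u"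
    "\<And>u. pd N \<Longrightarrow> u \<in> B \<Longrightarrow> 0 < lam u"
proof -
  obtain Q where Q: "Q \<in> K" "transpose Q = Q" "same_projection N Q"
    by (rule symmetric_projection_exists)
  obtain B where B: "orthonormal_basis B" "Q = spectral_matrix B (\<lambda>u. u \<bullet> (Q *v u))"
    using symmetric_matrix_spectral_decomposition[OF Q(2)] by blast
  define lam where "lam u = u \<bullet> (Q *v u)" for u
  have QB: "Q = spectral_matrix B lam" using B(2) by (simp add: lam_def[abs_def])
  have fin: "finite B" using B(1) by (simp add: orthonormal_basis_def)
  have sums: "(\<Sum>u | u \<in> B \<and> P (lam u). lam u) = (\<Sum>u | u \<in> B \<and> P (lam u). u \<bullet> (N *v u))" for P
    using projection_spectral_sum[OF B(1)] Q QB by blast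
  have N_nonneg: "0 \<le> u \<bullet> (N *v u)" for u using N by (simp add: psd_def)
  have nonneg: "0 \<le> lam u" if u: "u \<in> B" for u
  proof (rule ccontr)
    assume "\<not> 0 \<le> lam u"
    then have "0 < (\<Sum>u | u \<in> B \<and> lam u < 0. - lam u)"
      using fin u by (intro sum_pos2[of _ u]) auto
    moreover have "0 \<le> (\<Sum>u | u \<in> B \<and> lam u < 0. u \<bullet> (N *v u))"
      using N_nonneg by (intro sum_nonneg) simp
    ultimately show False using sums[of "\<lambda>x. x < 0"] by (simp add: sum_negf)
  qed
  have pos: "0 < lam u" if "pd N" and u: "u \<in> B" for u
  proof (rule ccontr)
    assume "\<not> 0 < lam u"
    moreover have "0 < u \<bullet> (N *v u)"
      using \<open>pd N\<close> orthonormal_basis_nonzero[OF B(1) u] by (simp add: pd_def)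
    ultimately have "0 < (\<Sum>u | u \<in> B \<and> lam u \<le> 0. u \<bullet> (N *v u))"
      using fin u N_nonneg by (intro sum_pos2[of _ u]) auto
    moreover have "(\<Sum>u | u \<in> B \<and> lam u \<le> 0. lam u) \<le> 0"
      by (rule sum_nonpos) simp
    ultimately show False using sums[of "\<lambda>x. x \<le> 0"] by simp
  qed
  show thesis using that[OF B(1)] Q QB nonneg pos by blast
qed

lemma sqrt_projection:
  assumes B: "orthonormal_basis B" and lam: "\<And>u. u \<in> B \<Longrightarrow> 0 \<le> lam u"
    and Q: "spectral_matrix B lam \<in> K" "same_projection N (spectral_matrix B lam)"
  defines "S \<equiv> spectral_matrix B (\<lambda>u. sqrt (lam u))"
  shows "S \<in> K" "same_projection N (S ** S)"
proof -
  show "S \<in> K" unfolding S_def by (rule spectral_fun_mem[OF B Q(1)])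
  have "S ** S = spectral_matrix B lam"
    unfolding S_def spectral_matrix_mult[OF B] using lam by (intro spectral_matrix_cong) simp
  then show "same_projection N (S ** S)" using Q(2) by simp
qed

lemma precond_objective_eq:
  assumes S: "transpose S = S" "same_projection M (S ** S)" and H: "H \<in> K" "pd H"
  shows "frob M (matrix_inv H) + trace H = trace ((S - H) ** matrix_inv H ** (S - H)) + 2 * trace S"
proof -
  let ?G = "matrix_inv H"
  have "?G \<in> K" "transpose ?G = ?G"
    using matrix_inv_mem[OF H] pd_matrix_inv(2)[OF H(2)] by (auto simp: pd_def)
  then have "frob M ?G = trace (S ** S ** ?G)"
    using S by (simp add: same_projection_def frob_eq_inner trace_matrix_mult_eq_inner matrix_transpose_mul)
  moreover have "H ** ?G = mat 1" "?G ** H = mat 1"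
    using invertible_matrix_inv pd_matrix_inv(1)[OF H(2)] by auto
  ultimately show ?thesis by (simp add: trace_sandwich_inverse)
qed

end

locale preconditioner_set = matrix_algebra K for K :: "(real^'n^'n) set" +
  fixes Hs :: "(real^'n^'n) set"
  assumes Hs_eq: "Hs = {A. psd A} \<inter> K"
begin

lemma precond_pd_eqI:
  assumes S: "S \<in> K" "pd S" "same_projection M (S ** S)"
  shows "precond_pd Hs M = S"
proof -
  have St: "transpose S = S" using S(2) by (simp add: pd_def)
  define excess where "excess H = trace ((S - H) ** matrix_inv H ** (S - H))" for H
  have objective: "frob M (matrix_inv H) + trace H = excess H + 2 * trace S" if "H \<in> Hs" "pd H" for H
    using precond_objective_eq[OF St S(3)] that by (simp add: Hs_eq excess_def)
  have excess: "0 \<le> excess H" "excess H = 0 \<Longrightarrow> H = S" if "pd H" for H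
    using trace_sandwich_pd[OF pd_matrix_inv(2)[OF that], of "S - H"] that St
    by (auto simp: excess_def transpose_diff pd_def)
  have "excess S = 0" by (simp add: excess_def)
  have "S \<in> Hs" using S by (simp add: Hs_eq pd_imp_psd)
  show ?thesis unfolding precond_pd_def
  proof (rule the_equality)
    show "S \<in> Hs \<and> pd S \<and> (\<forall>H\<in>Hs. pd H \<longrightarrow>
        frob M (matrix_inv S) + trace S \<le> frob M (matrix_inv H) + trace H)"
      using \<open>S \<in> Hs\<close> S(2) objective excess(1) \<open>excess S = 0\<close> by simp
  next
    fix H assume H: "H \<in> Hs \<and> pd H \<and> (\<forall>H'\<in>Hs. pd H' \<longrightarrow>
        frob M (matrix_inv H) + trace H \<le> frob M (matrix_inv H') + trace H')"
    then have "excess H \<le> 0"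
      using \<open>S \<in> Hs\<close> S(2) objective \<open>excess S = 0\<close> by fastforce
    then show "H = S" using H excess by (simp add: order_antisym)
  qed
qed

lemma precond_pd_spectral_sqrt:
  assumes B: "orthonormal_basis B" and lam: "\<And>u. u \<in> B \<Longrightarrow> 0 < lam u"
    and Q: "spectral_matrix B lam \<in> K" "same_projection N (spectral_matrix B lam)"
  shows "precond_pd Hs N = spectral_matrix B (\<lambda>u. sqrt (lam u))"
  using sqrt_projection[OF B _ Q] lam
  by (intro precond_pd_eqI) (auto simp: less_imp_le intro: pd_spectral_matrix[OF B])

lemma adaptive_std_le_trace:
  fixes f :: "real^'n \<Rightarrow> real" and M :: "'w measure" and F :: "'t \<Rightarrow> 'w \<Rightarrow> real^'n \<Rightarrow> real"
  assumes S: "S \<in> K" "pd S" "same_projection N (S ** S)"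
    and unbiased: "\<And>t x. (\<integral>\<omega>. grad (F t \<omega>) x \<partial>M) = grad f x"
    and cov_int: "\<And>t x. integrable M
          (\<lambda>\<omega>. outer (grad f x - grad (F t \<omega>) x) (grad f x - grad (F t \<omega>) x))"
    and cov: "\<And>t x. loewner_le
          (\<integral>\<omega>. outer (grad f x - grad (F t \<omega>) x) (grad f x - grad (F t \<omega>) x) \<partial>M) N"
  shows "adaptive_std Hs M F \<le> ennreal (trace S)"
proof -
  define T where "T = trace S"
  define G where "G = T *\<^sub>R matrix_inv S"
  have T: "0 < T" using S(2) by (simp add: T_def trace_pos_if_pd)
  have H: "inverse T *\<^sub>R S \<in> Hs" "pd (inverse T *\<^sub>R S)" "trace (inverse T *\<^sub>R S) \<le> 1"
    using S T by (simp_all add: Hs_eq scaleR_mem pd_imp_psd pd_scaleR trace_scaleR T_def)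
  have inv: "matrix_inv (inverse T *\<^sub>R S) = G"
    using T pd_matrix_inv(1)[OF S(2)] by (simp add: G_def matrix_inv_scaleR)
  have "psd G" using T pd_matrix_inv(2)[OF S(2)] by (simp add: G_def pd_imp_psd pd_scaleR)
  have "G \<bullet> N = T * T"
  proof -
    have "matrix_inv S \<in> K" "transpose (matrix_inv S) = matrix_inv S"
      using matrix_inv_mem[OF S(1,2)] pd_matrix_inv(2)[OF S(2)] by (auto simp: pd_def)
    then have "N \<bullet> matrix_inv S = (S ** S) \<bullet> matrix_inv S"
      using S(3) by (simp add: same_projection_def)
    also have "\<dots> = trace (S ** S ** matrix_inv S)"
      using S(2) by (simp add: trace_matrix_mult_eq_inner matrix_transpose_mul pd_def)
    also have "\<dots> = T"
      using invertible_matrix_inv(1)[OF pd_matrix_inv(1)[OF S(2)]]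
      by (simp add: T_def flip: matrix_mul_assoc)
    finally show ?thesis by (simp add: G_def inner_commute)
  qed
  have bound: "(\<integral>\<^sup>+\<omega>. ennreal (let v = grad (F t \<omega>) x - (\<integral>\<omega>'. grad (F t \<omega>') x \<partial>M)
      in v \<bullet> (G *v v)) \<partial>M) \<le> ennreal (T * T)" for t x
  proof -
    have "(let v = grad (F t \<omega>) x - (\<integral>\<omega>'. grad (F t \<omega>') x \<partial>M) in v \<bullet> (G *v v))
        = (grad f x - grad (F t \<omega>) x) \<bullet> (G *v (grad f x - grad (F t \<omega>) x))" for \<omega>
      by (simp add: unbiased matrix_vector_mult_diff_distrib inner_diff_left inner_diff_right)
    then show ?thesis
      using nn_integral_quadratic_form_le[OF \<open>psd G\<close> cov_int cov] \<open>G \<bullet> N = T * T\<close> by simp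
  qed
  have "adaptive_var_sq Hs M F \<le> ennreal (T * T)"
    unfolding adaptive_var_sq_def
    by (rule INF_lower2[of "inverse T *\<^sub>R S"]) (use H inv bound in \<open>auto intro!: SUP_least\<close>)
  then show ?thesis using T by (simp add: adaptive_std_le_of_var_sq_le T_def)
qed

lemma adaptive_std_le_trace_precond_pd:
  fixes f :: "real^'n \<Rightarrow> real" and M :: "'w measure" and F :: "'t \<Rightarrow> 'w \<Rightarrow> real^'n \<Rightarrow> real"
  assumes N: "pd N"
    and unbiased: "\<And>t x. (\<integral>\<omega>. grad (F t \<omega>) x \<partial>M) = grad f x"
    and cov_int: "\<And>t x. integrable M
          (\<lambda>\<omega>. outer (grad f x - grad (F t \<omega>) x) (grad f x - grad (F t \<omega>) x))"
    and cov: "\<And>t x. loewner_le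
          (\<integral>\<omega>. outer (grad f x - grad (F t \<omega>) x) (grad f x - grad (F t \<omega>) x) \<partial>M) N"
  shows "adaptive_std Hs M F \<le> ennreal (trace (precond_pd Hs N))"
proof -
  obtain B lam where B: "orthonormal_basis B"
    and Q: "spectral_matrix B lam \<in> K" "same_projection N (spectral_matrix B lam)"
    and lam: "\<And>u. u \<in> B \<Longrightarrow> 0 < lam u"
    using projection_spectral_decomposition[OF pd_imp_psd[OF N]] N by metis
  define S where "S = spectral_matrix B (\<lambda>u. sqrt (lam u))"
  have "S \<in> K" "same_projection N (S ** S)"
    using sqrt_projection[OF B _ Q] lam by (auto simp: S_def less_imp_le)
  moreover have "pd S" using lam by (simp add: S_def pd_spectral_matrix[OF B])
  ultimately have "adaptive_std Hs M F \<le> ennreal (trace S)"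
    using unbiased cov_int cov by (intro adaptive_std_le_trace)
  moreover have "precond_pd Hs N = S"
    unfolding S_def by (rule precond_pd_spectral_sqrt[OF B lam Q])
  ultimately show ?thesis by simp
qed

lemma tendsto_precond_pd_shift:
  assumes N: "psd N"
  shows "((\<lambda>d. precond_pd Hs (N + d *\<^sub>R mat 1)) \<longlongrightarrow> precond Hs N) (at_right 0)"
proof -
  obtain B lam where B: "orthonormal_basis B"
    and Q: "spectral_matrix B lam \<in> K" "same_projection N (spectral_matrix B lam)"
    and lam: "\<And>u. u \<in> B \<Longrightarrow> 0 \<le> lam u" and lam_pos: "\<And>u. pd N \<Longrightarrow> u \<in> B \<Longrightarrow> 0 < lam u"
    using projection_spectral_decomposition[OF N] by metis
  define S where "S d = spectral_matrix B (\<lambda>u. sqrt (lam u + d))" for d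
  have shift: "precond_pd Hs (N + d *\<^sub>R mat 1) = S d" if "0 < d \<or> (d = 0 \<and> pd N)" for d
    unfolding S_def
  proof (rule precond_pd_spectral_sqrt[OF B])
    show "0 < lam u + d" if "u \<in> B" for u
      using lam[OF that] lam_pos[OF _ that] \<open>0 < d \<or> (d = 0 \<and> pd N)\<close> by auto
    have "spectral_matrix B (\<lambda>u. lam u + d) = spectral_matrix B lam + d *\<^sub>R mat 1"
      by (simp add: spectral_matrix_add spectral_matrix_const[OF B])
    then show "spectral_matrix B (\<lambda>u. lam u + d) \<in> K"
      and "same_projection (N + d *\<^sub>R mat 1) (spectral_matrix B (\<lambda>u. lam u + d))"
      using Q by (simp_all add: add_mem scaleR_mem one_mem same_projection_shift)
  qed
  have "\<forall>\<^sub>F d in at_right 0. S d = precond_pd Hs (N + d *\<^sub>R mat 1)"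
    using eventually_at_right_less[of "0::real"] by eventually_elim (simp add: shift)
  moreover have "(S \<longlongrightarrow> S 0) (at_right 0)"
    unfolding S_def by (intro tendsto_spectral_matrix tendsto_intros)
  ultimately have limit: "((\<lambda>d. precond_pd Hs (N + d *\<^sub>R mat 1)) \<longlongrightarrow> S 0) (at_right 0)"
    using tendsto_cong by force
  have "precond Hs N = S 0"
  proof (cases "pd N")
    case True
    then show ?thesis using shift[of 0] by (simp add: precond_def)
  next
    case False
    then show ?thesis using limit by (simp add: precond_def tendsto_Lim)
  qed
  with limit show ?thesis by simp
qed

end

lemma well_structured_preconditioner_set:
  assumes "well_structured Hs" obtains K where "preconditioner_set K Hs"
proof -
  from assms obtain K where "\<forall>c A. A \<in> K \<longrightarrow> c *\<^sub>R A \<in> K" "\<forall>A B. A \<in> K \<longrightarrow> B \<in> K \<longrightarrow> A + B \<in> K"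
    "\<forall>A B. A \<in> K \<longrightarrow> B \<in> K \<longrightarrow> A ** B \<in> K" "mat 1 \<in> K" "Hs = {A. psd A} \<inter> K"
    unfolding well_structured_def by blast
  then have "preconditioner_set K Hs" by unfold_locales simp_all
  then show thesis by (rule that)
qed

theorem propositionA9:
  fixes Hs :: "(real^'n^'n) set"
    and f :: "real^'n \<Rightarrow> real"
    and M :: "'w measure"
    and F :: "'t \<Rightarrow> 'w \<Rightarrow> real^'n \<Rightarrow> real"
    and \<Sigma> :: "real^'n^'n"
  assumes ws: "well_structured Hs"
    and P: "prob_space M"
    and f_diff: "\<And>x. f differentiable (at x)"
    and F_diff: "\<And>t \<omega> x. \<omega> \<in> space M \<Longrightarrow> F t \<omega> differentiable (at x)"
    and grad_int: "\<And>t x. integrable M (\<lambda>\<omega>. grad (F t \<omega>) x)"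
    and unbiased: "\<And>t x. (\<integral>\<omega>. grad (F t \<omega>) x \<partial>M) = grad f x"
    and cov_int: "\<And>t x. integrable M
          (\<lambda>\<omega>. outer (grad f x - grad (F t \<omega>) x) (grad f x - grad (F t \<omega>) x))"
    and Sigma_psd: "psd \<Sigma>"
    and cov_bound: "\<And>t x. loewner_le
          (\<integral>\<omega>. outer (grad f x - grad (F t \<omega>) x) (grad f x - grad (F t \<omega>) x) \<partial>M) \<Sigma>"
  shows "adaptive_std Hs M F \<le> ennreal (trace (precond Hs \<Sigma>))"
proof -
  obtain K where "preconditioner_set K Hs" using ws by (rule well_structured_preconditioner_set)
  then interpret preconditioner_set K Hs .
  let ?P = "\<lambda>d. precond_pd Hs (\<Sigma> + d *\<^sub>R mat 1)"
  have bound: "adaptive_std Hs M F \<le> ennreal (trace (?P d))" if "0 < d" for d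
    using pd_add_scaled_identity[OF Sigma_psd that] unbiased cov_int
      loewner_le_add_scaled_identity[OF cov_bound less_imp_le[OF that]]
    by (intro adaptive_std_le_trace_precond_pd)
  have "\<forall>\<^sub>F d in at_right 0. adaptive_std Hs M F \<le> ennreal (trace (?P d))"
    using eventually_at_right_less[of "0::real"] by eventually_elim (rule bound)
  moreover have "((\<lambda>d. ennreal (trace (?P d))) \<longlongrightarrow> ennreal (trace (precond Hs \<Sigma>))) (at_right 0)"
    by (rule tendsto_ennrealI, rule tendsto_trace, rule tendsto_precond_pd_shift[OF Sigma_psd])
  ultimately show ?thesis
    using tendsto_le[OF trivial_limit_at_right_real _ tendsto_const] by blast
qed

end
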